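(* Let $\gamma$ be a quasiorder on a set $A$ and let $\alpha$ be a half-space on $A$ with $\gamma\subseteq\alpha$. Then there exists a half-space $\tau$ on $A$ such that $\gamma\subseteq\tau\subseteq\alpha$ and $\tau\cap\tau^{-1}=\gamma\cap\gamma^{-1}$.
   Context: A quasiorder on $A$ is a reflexive and transitive relation; $\Delta_A=\{(a,a)\mid a\in A\}$. A quasiorder $\alpha$ on $A$ is a half-space if there is a quasiorder $\beta$ on $A$ with $\alpha\cup\beta=A\times A$ and $\alpha\cap\beta=\Delta_A$. *)

theory Defs
  imports Main
begin

definition half_space :: "'a set \<Rightarrow> 'a rel \<Rightarrow> bool" where
  "half_space A \<alpha> \<longleftrightarrow> preorder_on A \<alpha> \<and>
     (\<exists>\<beta>. preorder_on A \<beta> \<and> \<alpha> \<union> \<beta> = A \<times> A \<and> \<alpha> \<inter> \<beta> = Id_on A)"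

end

theory Submission
  imports Defs
begin

text \<open>By Zorn's lemma choose \<open>\<tau>\<close> maximal among the quasiorders between \<open>\<gamma>\<close> and \<open>\<alpha>\<close> with the
  same symmetric part as \<open>\<gamma>\<close>. If some pair \<open>(a, b) \<in> \<alpha>\<close> were incomparable in \<open>\<tau>\<close>, forcing
  \<open>a \<le> b\<close> would enlarge \<open>\<tau>\<close> inside \<open>\<alpha>\<close> without identifying new elements; so \<open>\<tau>\<close> is total on
  \<open>\<alpha>\<close>. Then the complement of \<open>\<tau>\<close> plus the diagonal is transitive, since a chain of two
  non-\<open>\<tau>\<close> steps with a \<open>\<tau>\<close>-shortcut would either contradict totality of \<open>\<tau>\<close> on \<open>\<alpha>\<close> or
  consist of steps of the complementary half-space \<open>\<beta>\<close>, whose meet with \<open>\<alpha>\<close> is trivial.\<close>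

definition extend_preorder :: "'a rel \<Rightarrow> 'a \<Rightarrow> 'a \<Rightarrow> 'a rel" where
  "extend_preorder r a b = r \<union> {(x, y). (x, a) \<in> r \<and> (b, y) \<in> r}"

lemma trans_extend_preorder:
  assumes "trans r" and "(b, a) \<notin> r"
  shows "trans (extend_preorder r a b)"
proof (rule transI)
  fix x y z
  assume "(x, y) \<in> extend_preorder r a b" and "(y, z) \<in> extend_preorder r a b"
  then consider "(x, y) \<in> r" "(y, z) \<in> r" | "(x, y) \<in> r" "(y, a) \<in> r" "(b, z) \<in> r"
    | "(x, a) \<in> r" "(b, y) \<in> r" "(y, z) \<in> r" | "(b, y) \<in> r" "(y, a) \<in> r"
    unfolding extend_preorder_def by blast
  then show "(x, z) \<in> extend_preorder r a b"
  proof cases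
    case 4
    then show ?thesis using transD[OF assms(1)] assms(2) by blast
  qed (use transD[OF assms(1)] in \<open>unfold extend_preorder_def, blast+\<close>)
qed

lemma preorder_on_extend_preorder:
  assumes "preorder_on A r" and "(b, a) \<notin> r"
  shows "preorder_on A (extend_preorder r a b)"
  using assms trans_extend_preorder[of r b a]
  unfolding preorder_on_def extend_preorder_def refl_on_def by blast

lemma extend_preorder_sym_part:
  assumes "trans r" and "(b, a) \<notin> r"
  shows "extend_preorder r a b \<inter> (extend_preorder r a b)\<inverse> = r \<inter> r\<inverse>"
proof -
  have "(x, y) \<in> r"
    if "(x, y) \<in> extend_preorder r a b" "(y, x) \<in> extend_preorder r a b" for x y
    using that transD[OF assms(1)] assms(2) unfolding extend_preorder_def by blast
  moreover have "r \<subseteq> extend_preorder r a b"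
    unfolding extend_preorder_def by blast
  ultimately show ?thesis
    by blast
qed

lemma extend_preorder_subset:
  assumes "r \<subseteq> s" and "trans s" and "(a, b) \<in> s"
  shows "extend_preorder r a b \<subseteq> s"
  using assms unfolding extend_preorder_def trans_def by blast

lemma preorder_on_Union_chain:
  assumes "C \<noteq> {}" and "chain\<^sub>\<subseteq> C" and "\<forall>r\<in>C. preorder_on A r"
  shows "preorder_on A (\<Union>C)"
proof -
  have "trans (\<Union>C)"
    using assms(2) by (rule chain_subset_trans_Union) (use assms(3) in \<open>simp add: preorder_on_def\<close>)
  moreover have "\<Union>C \<subseteq> A \<times> A"
    using assms(3) unfolding preorder_on_def by blast
  moreover obtain r where "r \<in> C" and "refl_on A r"
    using assms(1,3) unfolding preorder_on_def by blast
  then have "refl_on A (\<Union>C)"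
    unfolding refl_on_def by blast
  ultimately show ?thesis
    unfolding preorder_on_def by blast
qed

lemma sym_part_Union_chain:
  assumes "C \<noteq> {}" and "chain\<^sub>\<subseteq> C" and "\<forall>r\<in>C. r \<inter> r\<inverse> = E"
  shows "\<Union>C \<inter> (\<Union>C)\<inverse> = E"
proof
  obtain r where "r \<in> C"
    using assms(1) by blast
  moreover have "r \<inter> r\<inverse> = E"
    using assms(3) \<open>r \<in> C\<close> by (rule bspec)
  ultimately show "E \<subseteq> \<Union>C \<inter> (\<Union>C)\<inverse>"
    by blast
  show "\<Union>C \<inter> (\<Union>C)\<inverse> \<subseteq> E"
  proof clarify
    fix x y r s assume "r \<in> C" "(x, y) \<in> r" "s \<in> C" "(y, x) \<in> s"
    moreover have "r \<subseteq> s \<or> s \<subseteq> r"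
      using assms(2) \<open>r \<in> C\<close> \<open>s \<in> C\<close> unfolding chain_subset_def by blast
    ultimately obtain t where "t \<in> C" and "(x, y) \<in> t \<inter> t\<inverse>"
      by blast
    moreover have "t \<inter> t\<inverse> = E"
      using assms(3) \<open>t \<in> C\<close> by (rule bspec)
    ultimately show "(x, y) \<in> E"
      by simp
  qed
qed

lemma exists_maximal_preorder_same_sym_part:
  assumes "preorder_on A \<gamma>" and "\<gamma> \<subseteq> \<alpha>"
  obtains \<tau> where "preorder_on A \<tau>" and "\<gamma> \<subseteq> \<tau>" and "\<tau> \<subseteq> \<alpha>" and "\<tau> \<inter> \<tau>\<inverse> = \<gamma> \<inter> \<gamma>\<inverse>"
    and "\<And>\<tau>'. preorder_on A \<tau>' \<Longrightarrow> \<tau> \<subseteq> \<tau>' \<Longrightarrow> \<tau>' \<subseteq> \<alpha> \<Longrightarrow> \<tau>' \<inter> \<tau>'\<inverse> = \<tau> \<inter> \<tau>\<inverse> \<Longrightarrow> \<tau>' = \<tau>"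
proof -
  define S where "S = {\<tau>. preorder_on A \<tau> \<and> \<gamma> \<subseteq> \<tau> \<and> \<tau> \<subseteq> \<alpha> \<and> \<tau> \<inter> \<tau>\<inverse> = \<gamma> \<inter> \<gamma>\<inverse>}"
  have "\<exists>\<tau>\<in>S. \<forall>\<tau>'\<in>S. \<tau> \<subseteq> \<tau>' \<longrightarrow> \<tau>' = \<tau>"
  proof (rule subset_Zorn_nonempty)
    show "S \<noteq> {}"
      using assms unfolding S_def by blast
    show "\<Union>C \<in> S" if "C \<noteq> {}" and "subset.chain S C" for C
    proof -
      have chain: "chain\<^sub>\<subseteq> C" and "C \<subseteq> S"
        using that(2) unfolding subset_chain_def chain_subset_def by auto
      then have "\<forall>r\<in>C. preorder_on A r" and "\<forall>r\<in>C. r \<inter> r\<inverse> = \<gamma> \<inter> \<gamma>\<inverse>"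
        and "\<forall>r\<in>C. \<gamma> \<subseteq> r \<and> r \<subseteq> \<alpha>"
        unfolding S_def by auto
      then have "preorder_on A (\<Union>C)" and "\<Union>C \<inter> (\<Union>C)\<inverse> = \<gamma> \<inter> \<gamma>\<inverse>"
        and "\<gamma> \<subseteq> \<Union>C" and "\<Union>C \<subseteq> \<alpha>"
        using preorder_on_Union_chain[OF \<open>C \<noteq> {}\<close> chain]
          sym_part_Union_chain[OF \<open>C \<noteq> {}\<close> chain] \<open>C \<noteq> {}\<close>
        by (simp, simp, blast, blast)
      then show ?thesis
        unfolding S_def by blast
    qed
  qed
  then obtain \<tau> where "\<tau> \<in> S" and maximal: "\<And>\<tau>'. \<tau>' \<in> S \<Longrightarrow> \<tau> \<subseteq> \<tau>' \<Longrightarrow> \<tau>' = \<tau>"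
    by blast
  show ?thesis
  proof (rule that)
    show "preorder_on A \<tau>" "\<gamma> \<subseteq> \<tau>" "\<tau> \<subseteq> \<alpha>" "\<tau> \<inter> \<tau>\<inverse> = \<gamma> \<inter> \<gamma>\<inverse>"
      using \<open>\<tau> \<in> S\<close> unfolding S_def by auto
    show "\<tau>' = \<tau>"
      if "preorder_on A \<tau>'" "\<tau> \<subseteq> \<tau>'" "\<tau>' \<subseteq> \<alpha>" "\<tau>' \<inter> \<tau>'\<inverse> = \<tau> \<inter> \<tau>\<inverse>" for \<tau>'
    proof (rule maximal)
      show "\<tau>' \<in> S"
        using that \<open>\<tau> \<in> S\<close> unfolding S_def by auto
    qed (fact that(2))
  qed
qed

lemma maximal_preorder_comparable:
  assumes "preorder_on A \<tau>" and "preorder_on A \<alpha>" and "\<tau> \<subseteq> \<alpha>" and "(a, b) \<in> \<alpha>"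
    and maximal: "\<And>\<tau>'. preorder_on A \<tau>' \<Longrightarrow> \<tau> \<subseteq> \<tau>' \<Longrightarrow> \<tau>' \<subseteq> \<alpha> \<Longrightarrow> \<tau>' \<inter> \<tau>'\<inverse> = \<tau> \<inter> \<tau>\<inverse> \<Longrightarrow> \<tau>' = \<tau>"
  shows "(a, b) \<in> \<tau> \<or> (b, a) \<in> \<tau>"
proof (rule disjCI)
  assume "(b, a) \<notin> \<tau>"
  have "trans \<tau>" and "trans \<alpha>" and "refl_on A \<tau>" and "a \<in> A" and "b \<in> A"
    using assms(1,2,4) unfolding preorder_on_def by auto
  have "extend_preorder \<tau> a b = \<tau>"
  proof (rule maximal)
    show "preorder_on A (extend_preorder \<tau> a b)"
      using assms(1) \<open>(b, a) \<notin> \<tau>\<close> by (rule preorder_on_extend_preorder)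
    show "\<tau> \<subseteq> extend_preorder \<tau> a b"
      unfolding extend_preorder_def by blast
    show "extend_preorder \<tau> a b \<subseteq> \<alpha>"
      using assms(3) \<open>trans \<alpha>\<close> assms(4) by (rule extend_preorder_subset)
    show "extend_preorder \<tau> a b \<inter> (extend_preorder \<tau> a b)\<inverse> = \<tau> \<inter> \<tau>\<inverse>"
      using \<open>trans \<tau>\<close> \<open>(b, a) \<notin> \<tau>\<close> by (rule extend_preorder_sym_part)
  qed
  moreover have "(a, b) \<in> extend_preorder \<tau> a b"
    using \<open>refl_on A \<tau>\<close> \<open>a \<in> A\<close> \<open>b \<in> A\<close> unfolding extend_preorder_def refl_on_def by blast
  ultimately show "(a, b) \<in> \<tau>"
    by simp
qed

lemma half_space_if_comparable:
  assumes "preorder_on A \<tau>" and "\<tau> \<subseteq> \<alpha>" and "half_space A \<alpha>"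
    and comparable: "\<And>a b. (a, b) \<in> \<alpha> \<Longrightarrow> (a, b) \<in> \<tau> \<or> (b, a) \<in> \<tau>"
  shows "half_space A \<tau>"
proof -
  obtain \<beta> where "trans \<beta>" and "\<alpha> \<union> \<beta> = A \<times> A" and "\<alpha> \<inter> \<beta> = Id_on A"
    using assms(3) unfolding half_space_def preorder_on_def by blast
  have "trans \<tau>" and "refl_on A \<tau>" and "\<tau> \<subseteq> A \<times> A"
    using assms(1) unfolding preorder_on_def by auto
  define \<sigma> where "\<sigma> = Id_on A \<union> (A \<times> A - \<tau>)"
  have "trans \<sigma>"
  proof (rule transI)
    fix x y z assume xy: "(x, y) \<in> \<sigma>" and yz: "(y, z) \<in> \<sigma>"
    show "(x, z) \<in> \<sigma>"
    proof (rule ccontr)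
      assume "(x, z) \<notin> \<sigma>"
      with xy yz have "(x, z) \<in> \<tau>" "x \<noteq> z" "(x, y) \<notin> \<tau>" "(y, z) \<notin> \<tau>" "x \<in> A" "y \<in> A" "z \<in> A"
        unfolding \<sigma>_def by auto
      have "(x, y) \<notin> \<alpha>"
        using comparable[of x y] \<open>(x, z) \<in> \<tau>\<close> \<open>(x, y) \<notin> \<tau>\<close> \<open>(y, z) \<notin> \<tau>\<close> \<open>trans \<tau>\<close>
        by (meson transD)
      moreover have "(y, z) \<notin> \<alpha>"
        using comparable[of y z] \<open>(x, z) \<in> \<tau>\<close> \<open>(x, y) \<notin> \<tau>\<close> \<open>(y, z) \<notin> \<tau>\<close> \<open>trans \<tau>\<close>
        by (meson transD)
      ultimately have "(x, z) \<in> \<beta>"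
        using \<open>\<alpha> \<union> \<beta> = A \<times> A\<close> \<open>trans \<beta>\<close> \<open>x \<in> A\<close> \<open>y \<in> A\<close> \<open>z \<in> A\<close> by (metis UnE mem_Sigma_iff transD)
      then have "(x, z) \<in> Id_on A"
        using \<open>(x, z) \<in> \<tau>\<close> assms(2) \<open>\<alpha> \<inter> \<beta> = Id_on A\<close> by blast
      with \<open>x \<noteq> z\<close> show False
        by blast
    qed
  qed
  then have "preorder_on A \<sigma>"
    unfolding preorder_on_def \<sigma>_def refl_on_def by blast
  moreover have "\<tau> \<union> \<sigma> = A \<times> A" and "\<tau> \<inter> \<sigma> = Id_on A"
    using \<open>refl_on A \<tau>\<close> \<open>\<tau> \<subseteq> A \<times> A\<close> unfolding \<sigma>_def refl_on_def by auto
  ultimately show ?thesis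
    using assms(1) unfolding half_space_def by blast
qed

theorem proposition2p4:
  assumes "preorder_on A \<gamma>" and "half_space A \<alpha>" and "\<gamma> \<subseteq> \<alpha>"
  shows "\<exists>\<tau>. half_space A \<tau> \<and> \<gamma> \<subseteq> \<tau> \<and> \<tau> \<subseteq> \<alpha> \<and> \<tau> \<inter> \<tau>\<inverse> = \<gamma> \<inter> \<gamma>\<inverse>"
proof -
  obtain \<tau> where \<tau>: "preorder_on A \<tau>" "\<gamma> \<subseteq> \<tau>" "\<tau> \<subseteq> \<alpha>" "\<tau> \<inter> \<tau>\<inverse> = \<gamma> \<inter> \<gamma>\<inverse>"
    and maximal: "\<And>\<tau>'. preorder_on A \<tau>' \<Longrightarrow> \<tau> \<subseteq> \<tau>' \<Longrightarrow> \<tau>' \<subseteq> \<alpha> \<Longrightarrow> \<tau>' \<inter> \<tau>'\<inverse> = \<tau> \<inter> \<tau>\<inverse> \<Longrightarrow> \<tau>' = \<tau>"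
    using exists_maximal_preorder_same_sym_part[OF assms(1,3)] by blast
  have "preorder_on A \<alpha>"
    using assms(2) unfolding half_space_def by blast
  have "(a, b) \<in> \<tau> \<or> (b, a) \<in> \<tau>" if "(a, b) \<in> \<alpha>" for a b
    using \<tau>(1) \<open>preorder_on A \<alpha>\<close> \<tau>(3) that maximal by (rule maximal_preorder_comparable)
  with \<tau>(1,3) assms(2) have "half_space A \<tau>"
    by (rule half_space_if_comparable)
  with \<tau> show ?thesis
    by blast
qed

end
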